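(* Let $p,q,r\in\mathbb N$ and let $\mathbf K$ be a commutative field. Suppose $A_1,\dots,A_d\in\mathrm{Rec}_{p\times r}(\mathbf K)$ and $B_1,\dots,B_e\in\mathrm{Rec}_{r\times q}(\mathbf K)$ are such that there exist matrices $\rho_{\mathcal A}(s,u)\in\mathbf K^{d\times d}$ ($0\le s<p$, $0\le u<r$) and $\rho_{\mathcal B}(u,t)\in\mathbf K^{e\times e}$ ($0\le u<r$, $0\le t<q$) with $\rho(s,u)A_i=\sum_{k=1}^d\rho_{\mathcal A}(s,u)_{k,i}A_k$ and $\rho(u,t)B_j=\sum_{l=1}^e\rho_{\mathcal B}(u,t)_{l,j}B_l$ for all $i,j$. Set $C_{ij}=A_iB_j\in\mathrm{Rec}_{p\times q}(\mathbf K)$. Then $C_{ij}[\emptyset,\emptyset]=A_i[\emptyset,\emptyset]\,B_j[\emptyset,\emptyset]$ and, for all $0\le s<p$, $0\le t<q$, $$\rho(s,t)C_{ij}=\sum_{k=1}^d\sum_{l=1}^e\Big(\sum_{u=0}^{r-1}\rho_{\mathcal A}(s,u)_{k,i}\,\rho_{\mathcal B}(u,t)_{l,j}\Big)C_{kl}.$$ Thus the $C_{ij}$ span a recursively closed subspace with shift matrices $\rho_{\mathcal C}(s,t)_{kl,ij}=\sum_{u=0}^{r-1}\rho_{\mathcal A}(s,u)_{k,i}\rho_{\mathcal B}(u,t)_{l,j}$.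
   Context: For $p,q,l\in\mathbb N$, $\mathcal M_{p\times q}^l$ is the set of pairs $(U,W)$ of words of common length $l$ with $U\in\{0,\dots,p-1\}^l$, $W\in\{0,\dots,q-1\}^l$, $\mathcal M_{p\times q}=\bigcup_l\mathcal M_{p\times q}^l$; $(\emptyset,\emptyset)$ is the empty word. Functions $A:\mathcal M_{p\times q}\to\mathbf K$ have values $A[U,W]$. Shift maps: $(\rho(S,T)A)[U,W]=A[US,WT]$; for a single letter pair $(s,t)$ we write $\rho(s,t)$. $\mathrm{Rec}_{p\times q}(\mathbf K)$ is the set of $A$ with finite-dimensional span of $\{\rho(S,T)A\}$. Matrix product: $(AB)[U,W]=\sum_{V\in\{0,\dots,r-1\}^l}A[U,V]B[V,W]$ for $(U,W)$ of length $l$. *)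

theory Defs
  imports Main
begin

text \<open>Words over {0,...,p-1} are lists of naturals; a function on M_{p x q}
  is a map nat list => nat list => 'k, of which only the values on
  M_{p x q} matter.\<close>

definition word_pairs :: "nat \<Rightarrow> nat \<Rightarrow> (nat list \<times> nat list) set" where
  "word_pairs p q = {(U, W). length U = length W \<and> set U \<subseteq> {..<p} \<and> set W \<subseteq> {..<q}}"

definition words :: "nat \<Rightarrow> nat \<Rightarrow> nat list set" where
  "words r l = {V. length V = l \<and> set V \<subseteq> {..<r}}"

definition shift :: "nat list \<Rightarrow> nat list \<Rightarrow> (nat list \<Rightarrow> nat list \<Rightarrow> 'k) \<Rightarrow> (nat list \<Rightarrow> nat list \<Rightarrow> 'k)" where
  "shift S T A = (\<lambda>U W. A (U @ S) (W @ T))"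

definition matprod :: "nat \<Rightarrow> (nat list \<Rightarrow> nat list \<Rightarrow> 'k::comm_semiring_1) \<Rightarrow> (nat list \<Rightarrow> nat list \<Rightarrow> 'k) \<Rightarrow> (nat list \<Rightarrow> nat list \<Rightarrow> 'k)" where
  "matprod r A B = (\<lambda>U W. \<Sum>V\<in>words r (length U). A U V * B V W)"

text \<open>Rec_{p x q}(K): the span of all shifts rho(S,T)A (as functions on M_{p x q})
  is finite-dimensional, i.e. contained in the span of finitely many functions.\<close>
definition recognizable :: "nat \<Rightarrow> nat \<Rightarrow> (nat list \<Rightarrow> nat list \<Rightarrow> 'k::field) \<Rightarrow> bool" where
  "recognizable p q A \<longleftrightarrow>
     (\<exists>F :: (nat list \<Rightarrow> nat list \<Rightarrow> 'k) list.
        \<forall>(S, T) \<in> word_pairs p q. \<exists>c :: nat \<Rightarrow> 'k.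
          \<forall>(U, W) \<in> word_pairs p q. shift S T A U W = (\<Sum>i<length F. c i * (F ! i) U W))"

end

theory Submission
  imports Defs
begin

text \<open>Splitting off the last letter of the summation word V = V'u in (AB)[Us, Wt] gives
  rho(s,t)(AB) = sum over u of rho(s,u)A rho(u,t)B. Since the product is bilinear, substituting
  the expansions of rho(s,u)A_i and rho(u,t)B_j in terms of the A_k and B_l expresses
  rho(s,t)C_ij as the stated combination of the C_kl. So the span of the finitely many C_kl is
  closed under all one-letter shifts, hence under all shifts, which makes every C_ij recognizable.\<close>

lemma shift_Nil [simp]: "shift [] [] A = A"
  by (simp add: shift_def)

lemma shift_Cons: "shift (s # S) (t # T) A = shift [s] [t] (shift S T A)"
  by (simp add: shift_def)

lemma words_0 [simp]: "words r 0 = {[]}"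
  by (auto simp: words_def)

lemma words_Suc: "words r (Suc n) = (\<lambda>(V, u). V @ [u]) ` (words r n \<times> {..<r})"
proof (intro set_eqI iffI)
  fix X assume X: "X \<in> words r (Suc n)"
  then have "length X = Suc n"
    by (simp add: words_def)
  then obtain V u where "X = V @ [u]"
    by (metis length_Suc_conv_rev)
  with X show "X \<in> (\<lambda>(V, u). V @ [u]) ` (words r n \<times> {..<r})"
    by (auto simp: words_def image_iff)
qed (auto simp: words_def)

lemma sum_words_Suc:
  "(\<Sum>V\<in>words r (Suc n). f V) = (\<Sum>V\<in>words r n. \<Sum>u<r. f (V @ [u]))"
proof -
  have "inj_on (\<lambda>(V, u). V @ [u]) (words r n \<times> {..<r})"
    by (auto simp: inj_on_def)
  then show ?thesis
    by (simp add: words_Suc sum.reindex sum.cartesian_product prod.case_distrib)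
qed

lemma matprod_Nil_Nil: "matprod r A B [] [] = A [] [] * B [] []"
  by (simp add: matprod_def)

lemma shift_matprod:
  "shift [s] [t] (matprod r A B) U W = (\<Sum>u<r. matprod r (shift [s] [u] A) (shift [u] [t] B) U W)"
proof -
  have "shift [s] [t] (matprod r A B) U W =
      (\<Sum>V\<in>words r (length U). \<Sum>u<r. A (U @ [s]) (V @ [u]) * B (V @ [u]) (W @ [t]))"
    by (simp add: shift_def matprod_def sum_words_Suc)
  also have "\<dots> = (\<Sum>u<r. \<Sum>V\<in>words r (length U). A (U @ [s]) (V @ [u]) * B (V @ [u]) (W @ [t]))"
    by (rule sum.swap)
  also have "\<dots> = (\<Sum>u<r. matprod r (shift [s] [u] A) (shift [u] [t] B) U W)"
    by (simp add: shift_def matprod_def)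
  finally show ?thesis .
qed

lemma matprod_bilinear:
  fixes A :: "'a \<Rightarrow> nat list \<Rightarrow> nat list \<Rightarrow> 'k::comm_semiring_1"
  assumes A': "\<forall>(U, V) \<in> word_pairs p r. A' U V = (\<Sum>k\<in>K. a k * A k U V)"
    and B': "\<forall>(V, W) \<in> word_pairs r q. B' V W = (\<Sum>l\<in>L. b l * B l V W)"
    and UW: "(U, W) \<in> word_pairs p q"
  shows "matprod r A' B' U W = (\<Sum>k\<in>K. \<Sum>l\<in>L. a k * b l * matprod r (A k) (B l) U W)"
proof -
  have "matprod r A' B' U W
      = (\<Sum>V\<in>words r (length U). (\<Sum>k\<in>K. a k * A k U V) * (\<Sum>l\<in>L. b l * B l V W))"
    unfolding matprod_def
  proof (rule sum.cong [OF refl])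
    fix V assume "V \<in> words r (length U)"
    with UW have "(U, V) \<in> word_pairs p r" "(V, W) \<in> word_pairs r q"
      by (auto simp: words_def word_pairs_def)
    with A' B' show "A' U V * B' V W = (\<Sum>k\<in>K. a k * A k U V) * (\<Sum>l\<in>L. b l * B l V W)"
      by fastforce
  qed
  also have "\<dots> = (\<Sum>V\<in>words r (length U). \<Sum>k\<in>K. \<Sum>l\<in>L. a k * b l * (A k U V * B l V W))"
    by (simp only: sum_product mult_ac)
  also have "\<dots> = (\<Sum>k\<in>K. \<Sum>V\<in>words r (length U). \<Sum>l\<in>L. a k * b l * (A k U V * B l V W))"
    by (rule sum.swap)
  also have "\<dots> = (\<Sum>k\<in>K. \<Sum>l\<in>L. \<Sum>V\<in>words r (length U). a k * b l * (A k U V * B l V W))"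
    by (rule sum.cong [OF refl], rule sum.swap)
  also have "\<dots> = (\<Sum>k\<in>K. \<Sum>l\<in>L. a k * b l * matprod r (A k) (B l) U W)"
    by (simp add: matprod_def sum_distrib_left)
  finally show ?thesis .
qed

lemma shift_matprod_expansion:
  fixes A :: "'a \<Rightarrow> nat list \<Rightarrow> nat list \<Rightarrow> 'k::comm_semiring_1"
  assumes A': "\<forall>u<r. \<forall>(U, V) \<in> word_pairs p r. shift [s] [u] A' U V = (\<Sum>k\<in>K. a u k * A k U V)"
    and B': "\<forall>u<r. \<forall>(V, W) \<in> word_pairs r q. shift [u] [t] B' V W = (\<Sum>l\<in>L. b u l * B l V W)"
    and UW: "(U, W) \<in> word_pairs p q"
  shows "shift [s] [t] (matprod r A' B') U W =
           (\<Sum>k\<in>K. \<Sum>l\<in>L. (\<Sum>u<r. a u k * b u l) * matprod r (A k) (B l) U W)"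
proof -
  have "shift [s] [t] (matprod r A' B') U W =
          (\<Sum>u<r. \<Sum>k\<in>K. \<Sum>l\<in>L. a u k * b u l * matprod r (A k) (B l) U W)"
    unfolding shift_matprod using A' B' UW
    by (intro sum.cong refl matprod_bilinear) auto
  also have "\<dots> = (\<Sum>k\<in>K. \<Sum>u<r. \<Sum>l\<in>L. a u k * b u l * matprod r (A k) (B l) U W)"
    by (rule sum.swap)
  also have "\<dots> = (\<Sum>k\<in>K. \<Sum>l\<in>L. \<Sum>u<r. a u k * b u l * matprod r (A k) (B l) U W)"
    by (rule sum.cong [OF refl], rule sum.swap)
  also have "\<dots> = (\<Sum>k\<in>K. \<Sum>l\<in>L. (\<Sum>u<r. a u k * b u l) * matprod r (A k) (B l) U W)"
    by (simp add: sum_distrib_right)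
  finally show ?thesis .
qed

lemma shift_in_span_if_shift_closed:
  fixes G :: "'a \<Rightarrow> nat list \<Rightarrow> nat list \<Rightarrow> 'k::comm_semiring_1"
  assumes "finite I"
    and closed: "\<forall>s<p. \<forall>t<q. \<forall>x\<in>I. \<forall>(U, W) \<in> word_pairs p q.
                     shift [s] [t] (G x) U W = (\<Sum>y\<in>I. R s t y x * G y U W)"
    and ST: "(S, T) \<in> word_pairs p q" and x: "x \<in> I"
  shows "\<exists>a. \<forall>(U, W) \<in> word_pairs p q. shift S T (G x) U W = (\<Sum>y\<in>I. a y * G y U W)"
proof -
  have "length S = length T" "set S \<subseteq> {..<p}" "set T \<subseteq> {..<q}"
    using ST by (auto simp: word_pairs_def)
  then show ?thesis
  proof (induction S T rule: list_induct2)
    case Nil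
    show ?case
    proof (intro exI ballI)
      fix UW show "case UW of (U, W) \<Rightarrow> shift [] [] (G x) U W =
                     (\<Sum>y\<in>I. of_bool (y = x) * G y U W)"
        using \<open>finite I\<close> x by (cases UW) simp
    qed
  next
    case (Cons s S t T)
    then obtain a where a: "\<forall>(U, W) \<in> word_pairs p q. shift S T (G x) U W = (\<Sum>y\<in>I. a y * G y U W)"
      by auto
    have s: "s < p" and t: "t < q" using Cons.prems by auto
    show ?case
    proof (intro exI ballI)
      fix UW assume "UW \<in> word_pairs p q"
      then obtain U W where UW: "UW = (U, W)" "(U, W) \<in> word_pairs p q" by (cases UW) auto
      then have UW': "(U @ [s], W @ [t]) \<in> word_pairs p q"
        using s t by (auto simp: word_pairs_def)
      have "shift [s] [t] (G y) U W = (\<Sum>z\<in>I. R s t z y * G z U W)" if "y \<in> I" for y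
        using closed s t UW(2) that by blast
      then have shift_G: "G y (U @ [s]) (W @ [t]) = (\<Sum>z\<in>I. R s t z y * G z U W)"
        if "y \<in> I" for y
        using that by (simp add: shift_def)
      have "shift (s # S) (t # T) (G x) U W = (\<Sum>y\<in>I. a y * G y (U @ [s]) (W @ [t]))"
        using a UW' by (auto simp: shift_Cons shift_def)
      also have "\<dots> = (\<Sum>y\<in>I. a y * (\<Sum>z\<in>I. R s t z y * G z U W))"
        by (rule sum.cong [OF refl]) (simp add: shift_G)
      also have "\<dots> = (\<Sum>z\<in>I. (\<Sum>y\<in>I. a y * R s t z y) * G z U W)"
        unfolding sum_distrib_left sum_distrib_right by (subst sum.swap) (simp add: mult.assoc)
      finally show "case UW of (U, W) \<Rightarrow> shift (s # S) (t # T) (G x) U W =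
                      (\<Sum>z\<in>I. (\<Sum>y\<in>I. a y * R s t z y) * G z U W)"
        using UW(1) by simp
    qed
  qed
qed

lemma recognizable_if_shifts_in_finite_span:
  fixes A :: "nat list \<Rightarrow> nat list \<Rightarrow> 'k::field"
  assumes "finite I"
    and span: "\<forall>(S, T) \<in> word_pairs p q. \<exists>a. \<forall>(U, W) \<in> word_pairs p q.
                 shift S T A U W = (\<Sum>y\<in>I. a y * G y U W)"
  shows "recognizable p q A"
proof -
  obtain xs where xs: "set xs = I" "distinct xs"
    using finite_distinct_list [OF \<open>finite I\<close>] by blast
  have nth_xs: "bij_betw ((!) xs) {..<length xs} I"
    using xs by (intro bij_betw_nth) auto
  show ?thesis
    unfolding recognizable_def
  proof (intro exI [of _ "map G xs"] ballI, clarify)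
    fix S T assume "(S, T) \<in> word_pairs p q"
    with span obtain a
      where a: "\<forall>(U, W) \<in> word_pairs p q. shift S T A U W = (\<Sum>y\<in>I. a y * G y U W)"
      by blast
    have "(\<Sum>y\<in>I. a y * G y U W) = (\<Sum>i<length xs. a (xs ! i) * G (xs ! i) U W)" for U W
      using sum.reindex_bij_betw [OF nth_xs, of "\<lambda>y. a y * G y U W"] by simp
    with a show "\<exists>c. \<forall>(U, W) \<in> word_pairs p q.
                   shift S T A U W = (\<Sum>i<length (map G xs). c i * (map G xs ! i) U W)"
      by (intro exI [of _ "\<lambda>i. a (xs ! i)"]) auto
  qed
qed

lemma recognizable_if_shift_closed:
  fixes G :: "'a \<Rightarrow> nat list \<Rightarrow> nat list \<Rightarrow> 'k::field"
  assumes "finite I"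
    and closed: "\<forall>s<p. \<forall>t<q. \<forall>x\<in>I. \<forall>(U, W) \<in> word_pairs p q.
                     shift [s] [t] (G x) U W = (\<Sum>y\<in>I. R s t y x * G y U W)"
    and "x \<in> I"
  shows "recognizable p q (G x)"
proof (rule recognizable_if_shifts_in_finite_span [OF \<open>finite I\<close>, where G = G], clarify)
  fix S T assume "(S, T) \<in> word_pairs p q"
  then show "\<exists>a. \<forall>(U, W) \<in> word_pairs p q. shift S T (G x) U W = (\<Sum>y\<in>I. a y * G y U W)"
    by (rule shift_in_span_if_shift_closed [OF \<open>finite I\<close> closed _ \<open>x \<in> I\<close>])
qed

theorem mainTheorem6:
  fixes p q r d e :: nat
    and A :: "nat \<Rightarrow> nat list \<Rightarrow> nat list \<Rightarrow> 'k::field"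
    and B :: "nat \<Rightarrow> nat list \<Rightarrow> nat list \<Rightarrow> 'k"
    and RA :: "nat \<Rightarrow> nat \<Rightarrow> nat \<Rightarrow> nat \<Rightarrow> 'k"
    and RB :: "nat \<Rightarrow> nat \<Rightarrow> nat \<Rightarrow> nat \<Rightarrow> 'k"
  assumes recA: "\<forall>i<d. recognizable p r (A i)"
    and recB: "\<forall>j<e. recognizable r q (B j)"
    and shA: "\<forall>s<p. \<forall>u<r. \<forall>i<d. \<forall>(U, W) \<in> word_pairs p r.
               shift [s] [u] (A i) U W = (\<Sum>k<d. RA s u k i * A k U W)"
    and shB: "\<forall>u<r. \<forall>t<q. \<forall>j<e. \<forall>(U, W) \<in> word_pairs r q.
               shift [u] [t] (B j) U W = (\<Sum>l<e. RB u t l j * B l U W)"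
  shows "\<forall>i<d. \<forall>j<e.
           recognizable p q (matprod r (A i) (B j))
         \<and> matprod r (A i) (B j) [] [] = A i [] [] * B j [] []
         \<and> (\<forall>s<p. \<forall>t<q. \<forall>(U, W) \<in> word_pairs p q.
              shift [s] [t] (matprod r (A i) (B j)) U W =
              (\<Sum>k<d. \<Sum>l<e. (\<Sum>u<r. RA s u k i * RB u t l j) * matprod r (A k) (B l) U W))"
proof -
  define C where "C = (\<lambda>(k, l). matprod r (A k) (B l))"
  have shC: "shift [s] [t] (matprod r (A i) (B j)) U W =
      (\<Sum>k<d. \<Sum>l<e. (\<Sum>u<r. RA s u k i * RB u t l j) * matprod r (A k) (B l) U W)"
    if "s < p" "t < q" "i < d" "j < e" "(U, W) \<in> word_pairs p q" for s t i j U W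
    by (rule shift_matprod_expansion) (use shA shB that in blast)+
  have closed: "\<forall>s<p. \<forall>t<q. \<forall>x\<in>{..<d} \<times> {..<e}. \<forall>(U, W) \<in> word_pairs p q.
          shift [s] [t] (C x) U W = (\<Sum>y\<in>{..<d} \<times> {..<e}.
            (case (y, x) of ((k, l), (i, j)) \<Rightarrow> \<Sum>u<r. RA s u k i * RB u t l j) * C y U W)"
    by (clarsimp simp: C_def shC sum.cartesian_product')
  have "recognizable p q (C x)" if "x \<in> {..<d} \<times> {..<e}" for x
    by (rule recognizable_if_shift_closed [OF _ closed that]) simp
  with shC show ?thesis
    by (auto simp: C_def matprod_Nil_Nil)
qed

end
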